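(* Let $f$ be a real-valued function of two arguments that is monotonic (non-decreasing) in its first argument and anti-monotonic (non-increasing) in its second argument. Let $x$ and $y$ be variables, each hosted on a single process of a computation, such that either both $x$ and $y$ are monotonically non-decreasing or both are monotonically non-increasing. Then, for every constant $c$ and every $\mathtt{relop} \in \{<, \leq, >, \geq\}$, the predicate $f(x,y)\ \mathtt{relop}\ c$ is regular.
   Context: A computation is a directed graph $\langle E, \rightarrow\rangle$ whose vertices (events) are partitioned among processes $p_1,\dots,p_n$; the events of each process are totally ordered in real time, each process $p_i$ has a fictitious initial event $\bot_i$ (first) and final event $\top_i$ (last), the path relation of the graph contains Lamport's happened-before relation, all initial events lie in one strongly connected component and all final events lie in one strongly connected component. A subset $C \subseteq E$ is a consistent cut if for every edge $(u,v)$, $v \in C$ implies $u \in C$; $\emptyset$ and $E$ are the trivial consistent cuts. A (global) predicate is a boolean function of process variables, evaluated at a non-trivial consistent cut $C$ using the values of the variables immediately after all events in $C$ have been executed; for a variable $x$ hosted on a process, $x(C)$ is its value after the last event of that process in $C$. A variable is monotonically non-decreasing (resp. non-increasing) if its value never decreases (resp. increases) along the events of its process. A predicate $b$ is regular if whenever consistent cuts $C_1$ and $C_2$ satisfy $b$, so do $C_1 \cap C_2$ and $C_1 \cup C_2$. *)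

theory Defs
  imports Complex_Main
begin

text \<open>A computation: a finite set of events E, partitioned among the processes P
(via proc), a directed edge relation on E, the real-time order of events on
each process (before), a message relation msg (send/receive), fictitious
initial and final events ini/fin per process.\<close>

definition happened_before ::
  "('e \<Rightarrow> 'e \<Rightarrow> bool) \<Rightarrow> ('e \<Rightarrow> 'e \<Rightarrow> bool) \<Rightarrow> 'e \<Rightarrow> 'e \<Rightarrow> bool" where
  "happened_before before msg = (\<lambda>u v. before u v \<or> msg u v)\<^sup>+\<^sup>+"

definition computation ::
  "'e set \<Rightarrow> ('e \<Rightarrow> 'e \<Rightarrow> bool) \<Rightarrow> 'p set \<Rightarrow> ('e \<Rightarrow> 'p) \<Rightarrow>
   ('e \<Rightarrow> 'e \<Rightarrow> bool) \<Rightarrow> ('e \<Rightarrow> 'e \<Rightarrow> bool) \<Rightarrow> ('p \<Rightarrow> 'e) \<Rightarrow> ('p \<Rightarrow> 'e) \<Rightarrow> bool" where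
  "computation E edge P proc before msg ini fin \<longleftrightarrow>
     finite E \<and> finite P \<and> P \<noteq> {} \<and>
     (\<forall>u v. edge u v \<longrightarrow> u \<in> E \<and> v \<in> E) \<and>
     (\<forall>e\<in>E. proc e \<in> P) \<and>
     \<comment> \<open>events of each process are totally ordered in real time\<close>
     (\<forall>u v. before u v \<longrightarrow> u \<in> E \<and> v \<in> E \<and> proc u = proc v) \<and>
     (\<forall>u\<in>E. \<not> before u u) \<and>
     (\<forall>u v w. before u v \<longrightarrow> before v w \<longrightarrow> before u w) \<and>
     (\<forall>u\<in>E. \<forall>v\<in>E. proc u = proc v \<longrightarrow> u = v \<or> before u v \<or> before v u) \<and>
     \<comment> \<open>messages are between events\<close>
     (\<forall>u v. msg u v \<longrightarrow> u \<in> E \<and> v \<in> E) \<and>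
     \<comment> \<open>initial and final events\<close>
     (\<forall>i\<in>P. ini i \<in> E \<and> proc (ini i) = i \<and> fin i \<in> E \<and> proc (fin i) = i \<and> ini i \<noteq> fin i \<and>
        (\<forall>e\<in>E. proc e = i \<longrightarrow> e \<noteq> ini i \<longrightarrow> before (ini i) e) \<and>
        (\<forall>e\<in>E. proc e = i \<longrightarrow> e \<noteq> fin i \<longrightarrow> before e (fin i))) \<and>
     \<comment> \<open>path relation contains happened-before\<close>
     (\<forall>u v. happened_before before msg u v \<longrightarrow> edge\<^sup>+\<^sup>+ u v) \<and>
     \<comment> \<open>initial events in one SCC, final events in one SCC\<close>
     (\<forall>i\<in>P. \<forall>j\<in>P. edge\<^sup>*\<^sup>* (ini i) (ini j)) \<and>
     (\<forall>i\<in>P. \<forall>j\<in>P. edge\<^sup>*\<^sup>* (fin i) (fin j))"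

definition consistent_cut :: "'e set \<Rightarrow> ('e \<Rightarrow> 'e \<Rightarrow> bool) \<Rightarrow> 'e set \<Rightarrow> bool" where
  "consistent_cut E edge C \<longleftrightarrow> C \<subseteq> E \<and> (\<forall>u v. edge u v \<longrightarrow> v \<in> C \<longrightarrow> u \<in> C)"

definition nontrivial_cut :: "'e set \<Rightarrow> ('e \<Rightarrow> 'e \<Rightarrow> bool) \<Rightarrow> 'e set \<Rightarrow> bool" where
  "nontrivial_cut E edge C \<longleftrightarrow> consistent_cut E edge C \<and> C \<noteq> {} \<and> C \<noteq> E"

definition last_event :: "('e \<Rightarrow> 'p) \<Rightarrow> ('e \<Rightarrow> 'e \<Rightarrow> bool) \<Rightarrow> 'p \<Rightarrow> 'e set \<Rightarrow> 'e" where
  "last_event proc before p C =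
     (THE e. e \<in> C \<and> proc e = p \<and> (\<forall>f\<in>C. proc f = p \<longrightarrow> f = e \<or> before f e))"

text \<open>Value of a variable hosted on process p, whose value after event e is val e,
at cut C.\<close>
definition var_at :: "('e \<Rightarrow> 'p) \<Rightarrow> ('e \<Rightarrow> 'e \<Rightarrow> bool) \<Rightarrow> 'p \<Rightarrow> ('e \<Rightarrow> real) \<Rightarrow> 'e set \<Rightarrow> real" where
  "var_at proc before p val C = val (last_event proc before p C)"

definition mono_nondecr_var :: "'e set \<Rightarrow> ('e \<Rightarrow> 'p) \<Rightarrow> ('e \<Rightarrow> 'e \<Rightarrow> bool) \<Rightarrow> 'p \<Rightarrow> ('e \<Rightarrow> real) \<Rightarrow> bool" where
  "mono_nondecr_var E proc before p val \<longleftrightarrow>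
     (\<forall>e\<in>E. \<forall>f\<in>E. proc e = p \<longrightarrow> proc f = p \<longrightarrow> before e f \<longrightarrow> val e \<le> val f)"

definition mono_nonincr_var :: "'e set \<Rightarrow> ('e \<Rightarrow> 'p) \<Rightarrow> ('e \<Rightarrow> 'e \<Rightarrow> bool) \<Rightarrow> 'p \<Rightarrow> ('e \<Rightarrow> real) \<Rightarrow> bool" where
  "mono_nonincr_var E proc before p val \<longleftrightarrow>
     (\<forall>e\<in>E. \<forall>f\<in>E. proc e = p \<longrightarrow> proc f = p \<longrightarrow> before e f \<longrightarrow> val f \<le> val e)"

definition regular_pred :: "'e set \<Rightarrow> ('e \<Rightarrow> 'e \<Rightarrow> bool) \<Rightarrow> ('e set \<Rightarrow> bool) \<Rightarrow> bool" where
  "regular_pred E edge b \<longleftrightarrow>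
     (\<forall>C1 C2. nontrivial_cut E edge C1 \<longrightarrow> nontrivial_cut E edge C2 \<longrightarrow> b C1 \<longrightarrow> b C2 \<longrightarrow>
        b (C1 \<inter> C2) \<and> b (C1 \<union> C2))"

end

theory Submission
  imports Defs
begin

text \<open>
  A nonempty consistent cut contains every initial event, because the initial events are mutually
  reachable and a cut is closed under predecessors; hence each process has a well-defined last
  event in it. Closure under the process order makes the last event of a process in
  \<open>C1 \<inter> C2\<close> the earlier, and in \<open>C1 \<union> C2\<close> the later, of its last events in
  \<open>C1\<close> and \<open>C2\<close> (this holds even when \<open>C1 \<union> C2 = E\<close>). So a non-decreasing variable
  takes the minimum of its two values at the meet and the maximum at the join, and conversely for a
  non-increasing one. As \<open>x\<close> and \<open>y\<close> move in the same direction, the pair \<open>(x, y)\<close> at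
  the meet or the join is the componentwise minimum or maximum of the pairs at \<open>C1\<close> and
  \<open>C2\<close>, and there \<open>f\<close>, being monotone in \<open>x\<close> and antitone in \<open>y\<close>, takes a value
  between its values at \<open>C1\<close> and \<open>C2\<close>. Finally, each half-line \<open>{t. relop t c}\<close>
  contains everything between two of its points.
\<close>

lemma computationD:
  assumes "computation E edge P proc before msg ini fin"
  shows computation_finite: "finite E"
    and computation_proc: "e \<in> E \<Longrightarrow> proc e \<in> P"
    and computation_before_trans: "before u v \<Longrightarrow> before v w \<Longrightarrow> before u w"
    and computation_before_irrefl: "\<not> before u u"
    and computation_before_total:
      "u \<in> E \<Longrightarrow> v \<in> E \<Longrightarrow> proc u = proc v \<Longrightarrow> u = v \<or> before u v \<or> before v u"
    and computation_ini: "i \<in> P \<Longrightarrow> ini i \<in> E \<and> proc (ini i) = i"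
    and computation_ini_first:
      "i \<in> P \<Longrightarrow> e \<in> E \<Longrightarrow> proc e = i \<Longrightarrow> e = ini i \<or> before (ini i) e"
    and computation_before_path: "before u v \<Longrightarrow> edge\<^sup>*\<^sup>* u v"
    and computation_ini_connected: "i \<in> P \<Longrightarrow> j \<in> P \<Longrightarrow> edge\<^sup>*\<^sup>* (ini i) (ini j)"
proof -
  note comp = assms[unfolded computation_def]
  show "finite E" "e \<in> E \<Longrightarrow> proc e \<in> P" "i \<in> P \<Longrightarrow> ini i \<in> E \<and> proc (ini i) = i"
    "i \<in> P \<Longrightarrow> j \<in> P \<Longrightarrow> edge\<^sup>*\<^sup>* (ini i) (ini j)"
    using comp by simp_all
  show "before u v \<Longrightarrow> before v w \<Longrightarrow> before u w" "\<not> before u u"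
    "u \<in> E \<Longrightarrow> v \<in> E \<Longrightarrow> proc u = proc v \<Longrightarrow> u = v \<or> before u v \<or> before v u"
    "i \<in> P \<Longrightarrow> e \<in> E \<Longrightarrow> proc e = i \<Longrightarrow> e = ini i \<or> before (ini i) e"
    using comp by (elim conjE; blast)+
  assume "before u v"
  then have "happened_before before msg u v"
    unfolding happened_before_def by (simp add: tranclp.r_into_trancl)
  with comp show "edge\<^sup>*\<^sup>* u v" by (simp add: tranclp_into_rtranclp)
qed

lemma consistent_cut_path_closed:
  assumes "consistent_cut E edge C" and "edge\<^sup>*\<^sup>* u v" and "v \<in> C"
  shows "u \<in> C"
  using assms(2,3)
  by (induction rule: converse_rtranclp_induct) (use assms(1) in \<open>auto simp: consistent_cut_def\<close>)

lemma consistent_cut_before_closed: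
  assumes "computation E edge P proc before msg ini fin" and "consistent_cut E edge C"
    and "before u v" and "v \<in> C"
  shows "u \<in> C"
  using assms consistent_cut_path_closed computation_before_path by metis

lemma ini_in_consistent_cut:
  assumes comp: "computation E edge P proc before msg ini fin"
    and cut: "consistent_cut E edge C" and "C \<noteq> {}" and p: "p \<in> P"
  shows "ini p \<in> C"
proof -
  obtain e where e: "e \<in> C" using \<open>C \<noteq> {}\<close> by blast
  with cut have "e \<in> E" by (auto simp: consistent_cut_def)
  with comp have i: "proc e \<in> P" by (rule computation_proc)
  have "ini (proc e) \<in> C"
    using computation_ini_first[OF comp i \<open>e \<in> E\<close> refl] e
      consistent_cut_before_closed[OF comp cut] by auto
  moreover have "edge\<^sup>*\<^sup>* (ini p) (ini (proc e))"
    using computation_ini_connected[OF comp p i] .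
  ultimately show ?thesis using consistent_cut_path_closed[OF cut] by blast
qed

lemma finite_total_has_greatest:
  assumes "finite S" and "S \<noteq> {}"
    and trans: "\<And>u v w. R u v \<Longrightarrow> R v w \<Longrightarrow> R u w"
    and total: "\<And>u v. u \<in> S \<Longrightarrow> v \<in> S \<Longrightarrow> u = v \<or> R u v \<or> R v u"
  shows "\<exists>e\<in>S. \<forall>f\<in>S. f = e \<or> R f e"
  using assms(1,2) total
proof (induction S rule: finite_ne_induct)
  case (singleton x)
  then show ?case by blast
next
  case (insert x F)
  then obtain m where m: "m \<in> F" "\<forall>f\<in>F. f = m \<or> R f m" by blast
  show ?case
  proof (cases "R m x")
    case True
    then have "\<forall>f\<in>insert x F. f = x \<or> R f x" using m(2) by (auto intro: trans)
    then show ?thesis by blast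
  next
    case False
    then have "x = m \<or> R x m" using insert.prems m(1) by blast
    then show ?thesis using m by blast
  qed
qed

definition is_last_event :: "('e \<Rightarrow> 'p) \<Rightarrow> ('e \<Rightarrow> 'e \<Rightarrow> bool) \<Rightarrow> 'p \<Rightarrow> 'e set \<Rightarrow> 'e \<Rightarrow> bool" where
  "is_last_event proc before p C e \<longleftrightarrow>
     e \<in> C \<and> proc e = p \<and> (\<forall>f\<in>C. proc f = p \<longrightarrow> f = e \<or> before f e)"

lemma last_event_eqI:
  assumes comp: "computation E edge P proc before msg ini fin"
    and last: "is_last_event proc before p C e"
  shows "last_event proc before p C = e"
  unfolding last_event_def
proof (rule the_equality)
  show "e \<in> C \<and> proc e = p \<and> (\<forall>f\<in>C. proc f = p \<longrightarrow> f = e \<or> before f e)"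
    using last by (simp add: is_last_event_def)
next
  fix e' assume last': "e' \<in> C \<and> proc e' = p \<and> (\<forall>f\<in>C. proc f = p \<longrightarrow> f = e' \<or> before f e')"
  with last have "e' = e \<or> before e' e" and "e = e' \<or> before e e'"
    by (auto simp: is_last_event_def)
  then show "e' = e"
    using computation_before_trans[OF comp] computation_before_irrefl[OF comp] by blast
qed

lemma is_last_event_last_event:
  assumes comp: "computation E edge P proc before msg ini fin"
    and cut: "consistent_cut E edge C" and "C \<noteq> {}" and p: "p \<in> P"
  shows "is_last_event proc before p C (last_event proc before p C)"
proof -
  let ?S = "{e \<in> C. proc e = p}"
  have "?S \<subseteq> E" using cut by (auto simp: consistent_cut_def)
  then have "finite ?S" using computation_finite[OF comp] finite_subset by blast
  moreover have "ini p \<in> ?S"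
    using ini_in_consistent_cut[OF assms] computation_ini[OF comp p] by simp
  moreover have "u = v \<or> before u v \<or> before v u" if "u \<in> ?S" "v \<in> ?S" for u v
    using that \<open>?S \<subseteq> E\<close> computation_before_total[OF comp] by auto
  ultimately obtain e where "e \<in> ?S" "\<forall>f\<in>?S. f = e \<or> before f e"
    using finite_total_has_greatest[of ?S before] computation_before_trans[OF comp] by blast
  then have "is_last_event proc before p C e" by (simp add: is_last_event_def)
  then show ?thesis using last_event_eqI[OF comp] by simp
qed

lemma is_last_event_inter:
  assumes comp: "computation E edge P proc before msg ini fin" and cut2: "consistent_cut E edge C2"
    and last1: "is_last_event proc before p C1 e1" and last2: "is_last_event proc before p C2 e2"
    and le: "e1 = e2 \<or> before e1 e2"
  shows "is_last_event proc before p (C1 \<inter> C2) e1"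
proof -
  have "e1 \<in> C2"
    using le last2 consistent_cut_before_closed[OF comp cut2] by (auto simp: is_last_event_def)
  then show ?thesis using last1 by (auto simp: is_last_event_def)
qed

lemma is_last_event_union:
  assumes comp: "computation E edge P proc before msg ini fin"
    and last1: "is_last_event proc before p C1 e1" and last2: "is_last_event proc before p C2 e2"
    and le: "e1 = e2 \<or> before e1 e2"
  shows "is_last_event proc before p (C1 \<union> C2) e2"
proof -
  have "f = e2 \<or> before f e2" if "f \<in> C1" "proc f = p" for f
  proof -
    from last1 that have "f = e1 \<or> before f e1" by (simp add: is_last_event_def)
    with le show ?thesis using computation_before_trans[OF comp] by blast
  qed
  then show ?thesis using last2 by (auto simp: is_last_event_def)
qed

lemma last_event_inter_union:
  assumes comp: "computation E edge P proc before msg ini fin"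
    and cut1: "consistent_cut E edge C1" "C1 \<noteq> {}"
    and cut2: "consistent_cut E edge C2" "C2 \<noteq> {}" and p: "p \<in> P"
    and le: "last_event proc before p C1 = last_event proc before p C2 \<or>
      before (last_event proc before p C1) (last_event proc before p C2)"
  shows "last_event proc before p (C1 \<inter> C2) = last_event proc before p C1"
    and "last_event proc before p (C1 \<union> C2) = last_event proc before p C2"
proof -
  note last1 = is_last_event_last_event[OF comp cut1 p]
    and last2 = is_last_event_last_event[OF comp cut2 p]
  show "last_event proc before p (C1 \<inter> C2) = last_event proc before p C1"
    using last_event_eqI[OF comp is_last_event_inter[OF comp cut2(1) last1 last2 le]] .
  show "last_event proc before p (C1 \<union> C2) = last_event proc before p C2"
    using last_event_eqI[OF comp is_last_event_union[OF comp last1 last2 le]] .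
qed

lemma var_at_inter_union_nondecr:
  assumes comp: "computation E edge P proc before msg ini fin"
    and cut1: "consistent_cut E edge C1" "C1 \<noteq> {}"
    and cut2: "consistent_cut E edge C2" "C2 \<noteq> {}" and p: "p \<in> P"
    and mono: "mono_nondecr_var E proc before p val"
  shows "var_at proc before p val (C1 \<inter> C2) =
           min (var_at proc before p val C1) (var_at proc before p val C2)"
    and "var_at proc before p val (C1 \<union> C2) =
           max (var_at proc before p val C1) (var_at proc before p val C2)"
proof -
  let ?last = "last_event proc before p" and ?x = "var_at proc before p val"
  have last_in_E: "?last C \<in> E \<and> proc (?last C) = p" if "C \<in> {C1, C2}" for C
  proof -
    from that cut1 cut2 have cut: "consistent_cut E edge C" "C \<noteq> {}" by auto
    then have "C \<subseteq> E" by (simp add: consistent_cut_def)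
    with is_last_event_last_event[OF comp cut p] show ?thesis
      by (auto simp: is_last_event_def)
  qed
  have ordered: "?x (D1 \<inter> D2) = min (?x D1) (?x D2) \<and> ?x (D1 \<union> D2) = max (?x D1) (?x D2)"
    if D: "{D1, D2} = {C1, C2}" and le: "?last D1 = ?last D2 \<or> before (?last D1) (?last D2)"
    for D1 D2
  proof -
    have cuts: "consistent_cut E edge D1" "D1 \<noteq> {}" "consistent_cut E edge D2" "D2 \<noteq> {}"
      using D cut1 cut2 by (auto simp: doubleton_eq_iff)
    have "val (?last D1) \<le> val (?last D2)"
      using le mono last_in_E[of D1] last_in_E[of D2] D by (auto simp: mono_nondecr_var_def)
    then show ?thesis
      using last_event_inter_union[OF comp cuts p le] by (simp add: var_at_def)
  qed
  have "?last C1 = ?last C2 \<or> before (?last C1) (?last C2) \<or> before (?last C2) (?last C1)"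
    using computation_before_total[OF comp] last_in_E by auto
  then have "?x (C1 \<inter> C2) = min (?x C1) (?x C2) \<and> ?x (C1 \<union> C2) = max (?x C1) (?x C2)"
    using ordered[of C1 C2] ordered[of C2 C1]
    by (auto simp: Int_commute Un_commute min.commute max.commute insert_commute)
  then show "?x (C1 \<inter> C2) = min (?x C1) (?x C2)" and "?x (C1 \<union> C2) = max (?x C1) (?x C2)"
    by simp_all
qed

lemma var_at_inter_union_nonincr:
  assumes comp: "computation E edge P proc before msg ini fin"
    and cut1: "consistent_cut E edge C1" "C1 \<noteq> {}"
    and cut2: "consistent_cut E edge C2" "C2 \<noteq> {}" and p: "p \<in> P"
    and mono: "mono_nonincr_var E proc before p val"
  shows "var_at proc before p val (C1 \<inter> C2) =
           max (var_at proc before p val C1) (var_at proc before p val C2)"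
    and "var_at proc before p val (C1 \<union> C2) =
           min (var_at proc before p val C1) (var_at proc before p val C2)"
proof -
  have "mono_nondecr_var E proc before p (\<lambda>e. - val e)"
    using mono by (simp add: mono_nonincr_var_def mono_nondecr_var_def)
  note neg = var_at_inter_union_nondecr[OF comp cut1 cut2 p this]
  show "var_at proc before p val (C1 \<inter> C2) =
          max (var_at proc before p val C1) (var_at proc before p val C2)"
    using neg(1) by (simp add: var_at_def min_def max_def split: if_splits)
  show "var_at proc before p val (C1 \<union> C2) =
          min (var_at proc before p val C1) (var_at proc before p val C2)"
    using neg(2) by (simp add: var_at_def min_def max_def split: if_splits)
qed

lemma mono_antimono_between:
  fixes f :: "'a::linorder \<Rightarrow> 'b::linorder \<Rightarrow> 'c::linorder"
  assumes mono: "\<And>a a' b. a \<le> a' \<Longrightarrow> f a b \<le> f a' b"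
    and antimono: "\<And>a b b'. b \<le> b' \<Longrightarrow> f a b' \<le> f a b"
    and xy: "(x = min x1 x2 \<and> y = min y1 y2) \<or> (x = max x1 x2 \<and> y = max y1 y2)"
  shows "f x y \<in> {min (f x1 y1) (f x2 y2) .. max (f x1 y1) (f x2 y2)}"
proof -
  have corner: "f x1' y1' \<le> f x y \<and> f x y \<le> f x2' y2'"
    if "x1' \<le> x2'" "y2' \<le> y1'" "x \<in> {x1', x2'}" "y \<in> {y1', y2'}" for x1' x2' y1' y2'
  proof -
    have "f x1' y1' \<le> f x1' y" "f x1' y \<le> f x y" "f x y \<le> f x2' y" "f x2' y \<le> f x2' y2'"
      using that antimono mono by auto
    then show ?thesis by (meson order_trans)
  qed
  have xy_corner: "x \<in> {x1, x2}" "y \<in> {y1, y2}" using xy by (auto simp: min_def max_def)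
  consider (concordant) "x = x1 \<and> y = y1 \<or> x = x2 \<and> y = y2"
    | (discordant) "x1 \<le> x2" "y2 \<le> y1" | (discordant') "x2 \<le> x1" "y1 \<le> y2"
    by (cases "x1 \<le> x2"; cases "y1 \<le> y2") (use xy in \<open>auto simp: min_def max_def\<close>)
  then show ?thesis
  proof cases
    case concordant
    then show ?thesis by auto
  next
    case discordant
    then show ?thesis
      using corner[of x1 x2 y2 y1] xy_corner by (simp add: min_le_iff_disj le_max_iff_disj)
  next
    case discordant'
    then show ?thesis
      using corner[of x2 x1 y1 y2] xy_corner
      by (simp add: insert_commute min_le_iff_disj le_max_iff_disj)
  qed
qed

lemma comparison_with_const_convex:
  fixes a b t c :: "'a::linorder"
  assumes "relop \<in> {(<), (\<le>), (>), (\<ge>)}" and "relop a c" and "relop b c"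
    and "t \<in> {min a b .. max a b}"
  shows "relop t c"
  using assms by (auto simp: min_def max_def split: if_splits)

theorem theorem1:
  fixes E :: "'e set" and edge before msg :: "'e \<Rightarrow> 'e \<Rightarrow> bool"
    and P :: "'p set" and proc :: "'e \<Rightarrow> 'p" and ini fin :: "'p \<Rightarrow> 'e"
    and f :: "real \<Rightarrow> real \<Rightarrow> real"
    and px py :: 'p and xv yv :: "'e \<Rightarrow> real"
    and c :: real and relop :: "real \<Rightarrow> real \<Rightarrow> bool"
  assumes comp: "computation E edge P proc before msg ini fin"
    and f_mono: "\<And>a a' b. a \<le> a' \<Longrightarrow> f a b \<le> f a' b"
    and f_antimono: "\<And>a b b'. b \<le> b' \<Longrightarrow> f a b' \<le> f a b"
    and px: "px \<in> P" and py: "py \<in> P"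
    and xy_mono: "(mono_nondecr_var E proc before px xv \<and> mono_nondecr_var E proc before py yv) \<or>
                  (mono_nonincr_var E proc before px xv \<and> mono_nonincr_var E proc before py yv)"
    and relop: "relop \<in> {(<), (\<le>), (>), (\<ge>)}"
  shows "regular_pred E edge
           (\<lambda>C. relop (f (var_at proc before px xv C) (var_at proc before py yv C)) c)"
  unfolding regular_pred_def
proof (intro allI impI)
  fix C1 C2
  let ?x = "var_at proc before px xv" and ?y = "var_at proc before py yv"
  assume "nontrivial_cut E edge C1" "nontrivial_cut E edge C2"
    and b1: "relop (f (?x C1) (?y C1)) c" and b2: "relop (f (?x C2) (?y C2)) c"
  then have cuts: "consistent_cut E edge C1" "C1 \<noteq> {}" "consistent_cut E edge C2" "C2 \<noteq> {}"
    by (simp_all add: nontrivial_cut_def)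
  let ?min_or_max = "\<lambda>C. (?x C = min (?x C1) (?x C2) \<and> ?y C = min (?y C1) (?y C2)) \<or>
                           (?x C = max (?x C1) (?x C2) \<and> ?y C = max (?y C1) (?y C2))"
  consider "mono_nondecr_var E proc before px xv" "mono_nondecr_var E proc before py yv"
    | "mono_nonincr_var E proc before px xv" "mono_nonincr_var E proc before py yv"
    using xy_mono by blast
  then have "?min_or_max (C1 \<inter> C2)" and "?min_or_max (C1 \<union> C2)"
    by (cases; simp add: var_at_inter_union_nondecr[OF comp cuts px]
          var_at_inter_union_nondecr[OF comp cuts py] var_at_inter_union_nonincr[OF comp cuts px]
          var_at_inter_union_nonincr[OF comp cuts py])+
  moreover have "relop (f (?x C) (?y C)) c" if "?min_or_max C" for C
    using comparison_with_const_convex[OF relop b1 b2 mono_antimono_between[OF f_mono f_antimono that]] .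
  ultimately show "relop (f (?x (C1 \<inter> C2)) (?y (C1 \<inter> C2))) c \<and>
                   relop (f (?x (C1 \<union> C2)) (?y (C1 \<union> C2))) c"
    by blast
qed

end
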